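(* Let $f:[0,1]\to[0,1]$ be a surjective continuous function. If $f$ admits a periodic point of period $m$ for some $m>2$, then $f$ admits a splitting sequence.
   Context: A point $x$ is periodic of period $m$ if $f^m(x)=x$ and $f^i(x)\neq x$ for $0<i<m$. A sequence $(T_n)_{n\in\mathbb N}$ of closed intervals $T_n\subsetneq[0,1]$ (possibly degenerate) is tight if $f(T_{n+1})=T_n$ for every $n$ and $T_n$ is nondegenerate for all sufficiently large $n$. A tight sequence $(T_n)$, $T_n=[l_n,r_n]$, is a splitting sequence admitted by $f$ if there are an infinite set $N\subseteq\mathbb N$ and nondegenerate closed intervals $S_n\subseteq[0,1]$ ($n\in N$) with $S_n\cap T_n\subseteq\{l_n,r_n\}$ and $f(S_n)=f(T_n)$ for all $n\in N$. *)

theory Defs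
  imports "HOL-Analysis.Analysis"
begin

definition periodic_point :: "(real \<Rightarrow> real) \<Rightarrow> nat \<Rightarrow> real \<Rightarrow> bool" where
  "periodic_point f m x \<longleftrightarrow> (f ^^ m) x = x \<and> (\<forall>i. 0 < i \<and> i < m \<longrightarrow> (f ^^ i) x \<noteq> x)"

definition tight_seq :: "(real \<Rightarrow> real) \<Rightarrow> (nat \<Rightarrow> real) \<Rightarrow> (nat \<Rightarrow> real) \<Rightarrow> bool" where
  "tight_seq f l r \<longleftrightarrow>
     (\<forall>n. 0 \<le> l n \<and> l n \<le> r n \<and> r n \<le> 1 \<and> {l n..r n} \<noteq> {0..1}) \<and>
     (\<forall>n. f ` {l (Suc n)..r (Suc n)} = {l n..r n}) \<and>
     (\<exists>n0. \<forall>n\<ge>n0. l n < r n)"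

definition splitting_seq :: "(real \<Rightarrow> real) \<Rightarrow> (nat \<Rightarrow> real) \<Rightarrow> (nat \<Rightarrow> real) \<Rightarrow> bool" where
  "splitting_seq f l r \<longleftrightarrow> tight_seq f l r \<and>
     (\<exists>N::nat set. infinite N \<and>
        (\<forall>n\<in>N. \<exists>a b. 0 \<le> a \<and> a < b \<and> b \<le> 1 \<and>
            {a..b} \<inter> {l n..r n} \<subseteq> {l n, r n} \<and>
            f ` {a..b} = f ` {l n..r n}))"

definition admits_splitting_seq :: "(real \<Rightarrow> real) \<Rightarrow> bool" where
  "admits_splitting_seq f \<longleftrightarrow> (\<exists>l r. splitting_seq f l r)"

end

theory Submission
  imports Defs
begin

(* Let q < Q be the extreme points of the periodic orbit P. Since f permutes P without points
   of period 1 or 2, the relative position of f q, f Q and of the f-preimages of q and Q in P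
   yields points u < v of P and an interval [a,b] with f([a,b]) containing [u,v] which meets the
   interval J spanned by the preimages f^(m-1) u, f^(m-1) v at most in its endpoints.
   Pulling [u,v] back along the m-periodic backward orbits of u and v gives a tight sequence
   T_n; it stays proper because f([0,1]) = [0,1]. At the times n = km + 1 the interval T_n lies
   in J while f(T_n) = T_km lies in [u,v], hence in f([a,b]), so a subinterval of [a,b] has the
   same image as T_n and meets it at most in endpoints. *)

lemma Icc_min_max_subset_continuous_image:
  fixes f :: "real \<Rightarrow> real"
  assumes "continuous_on {a..b} f" "s \<in> {a..b}" "t \<in> {a..b}"
  shows "{min (f s) (f t)..max (f s) (f t)} \<subseteq> f ` {a..b}"
proof -
  have "connected (f ` {a..b})"
    using connected_continuous_image[OF assms(1) connected_Icc] .
  then show ?thesis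
    using connected_contains_Icc[of "f ` {a..b}" "f s" "f t"]
      connected_contains_Icc[of "f ` {a..b}" "f t" "f s"] assms(2,3)
    by (auto simp: min_def max_def)
qed

lemma continuous_image_Icc_if_endpoint_values_unique:
  fixes f :: "real \<Rightarrow> real"
  assumes cont: "continuous_on {a..b} f" and "a \<le> b" "f a < f b"
    and a_unique: "\<And>z. z \<in> {a..b} \<Longrightarrow> f z = f a \<Longrightarrow> z = a"
    and b_unique: "\<And>z. z \<in> {a..b} \<Longrightarrow> f z = f b \<Longrightarrow> z = b"
  shows "f ` {a..b} = {f a..f b}"
proof
  show "f ` {a..b} \<subseteq> {f a..f b}"
  proof (rule image_subsetI, rule ccontr)
    fix z
    assume z: "z \<in> {a..b}" and "f z \<notin> {f a..f b}"
    then consider "f z < f a" | "f b < f z"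
      by fastforce
    then show False
    proof cases
      case 1
      moreover have "continuous_on {z..b} f"
        using cont z by (auto intro: continuous_on_subset)
      ultimately obtain w where "z \<le> w" "w \<le> b" "f w = f a"
        using IVT'[of f z "f a" b] z \<open>f a < f b\<close> by auto
      then show False
        using a_unique[of w] 1 z by auto
    next
      case 2
      moreover have "continuous_on {a..z} f"
        using cont z by (auto intro: continuous_on_subset)
      ultimately obtain w where "a \<le> w" "w \<le> z" "f w = f b"
        using IVT'[of f a "f b" z] z \<open>f a < f b\<close> by auto
      then show False
        using b_unique[of w] 2 z by auto
    qed
  qed
  show "{f a..f b} \<subseteq> f ` {a..b}"
    using Icc_min_max_subset_continuous_image[OF cont, of a b] \<open>a \<le> b\<close> \<open>f a < f b\<close>
    by simp
qed

(* [a,b] runs from the last point of [s,t] where f takes the value f s to the first later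
   point where f takes the value f t. *)
lemma continuous_image_exact_subinterval_ordered:
  fixes f :: "real \<Rightarrow> real"
  assumes cont: "continuous_on {s..t} f" and "s \<le> t" and "f s < f t"
  obtains a b where "s \<le> a" "a < b" "b \<le> t" "f ` {a..b} = {f s..f t}"
proof -
  have level_compact: "compact {z \<in> {c..t}. f z = y}" if "s \<le> c" for c y
  proof -
    have "compact ({c..t} \<inter> {z \<in> {c..t}. f z = y})"
      using cont that
      by (intro compact_Int_closed compact_Icc continuous_closed_preimage_constant)
        (auto intro: continuous_on_subset)
    then show ?thesis
      by (subst (asm) Int_absorb1) auto
  qed
  obtain a where a: "a \<in> {s..t}" "f a = f s"
    and a_last: "\<And>z. z \<in> {s..t} \<Longrightarrow> f z = f s \<Longrightarrow> z \<le> a"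
    using compact_attains_sup[OF level_compact[of s "f s"]] \<open>s \<le> t\<close> by fastforce
  obtain b where b: "b \<in> {a..t}" "f b = f t"
    and b_first: "\<And>z. z \<in> {a..t} \<Longrightarrow> f z = f t \<Longrightarrow> b \<le> z"
    using compact_attains_inf[OF level_compact[of a "f t"]] a by fastforce
  have "a < b"
    using a b \<open>f s < f t\<close> by (metis atLeastAtMost_iff order_le_less order_less_irrefl)
  have "continuous_on {a..b} f"
    using cont a b by (auto intro: continuous_on_subset)
  moreover have "z = a" if "z \<in> {a..b}" "f z = f a" for z
    using a_last[of z] that a b by fastforce
  moreover have "z = b" if "z \<in> {a..b}" "f z = f b" for z
    using b_first[of z] that a b by fastforce
  ultimately have "f ` {a..b} = {f a..f b}"
    using \<open>a < b\<close> a b \<open>f s < f t\<close>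
    by (intro continuous_image_Icc_if_endpoint_values_unique) auto
  then show ?thesis
    using that[of a b] a b \<open>a < b\<close> by simp
qed

lemma continuous_image_exact_subinterval:
  fixes f :: "real \<Rightarrow> real"
  assumes cont: "continuous_on {a..b} f" and "c < d" "c \<in> f ` {a..b}" "d \<in> f ` {a..b}"
  obtains a' b' where "a \<le> a'" "a' < b'" "b' \<le> b" "f ` {a'..b'} = {c..d}"
proof -
  obtain s t where s: "s \<in> {a..b}" "f s = c" and t: "t \<in> {a..b}" "f t = d"
    using assms by auto
  show ?thesis
  proof (cases "s \<le> t")
    case True
    have "continuous_on {s..t} f"
      using cont s t by (auto intro: continuous_on_subset)
    then show ?thesis
      using continuous_image_exact_subinterval_ordered[of s t f] that True s t \<open>c < d\<close>
      by (metis atLeastAtMost_iff order_trans)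
  next
    case False
    define g where "g x = f (- x)" for x
    have "continuous_on {-s..-t} g"
      unfolding g_def using cont s t
      by (intro continuous_on_compose2[OF cont]) (auto intro: continuous_intros)
    then obtain a' b' where ab': "-s \<le> a'" "a' < b'" "b' \<le> -t" "g ` {a'..b'} = {c..d}"
      using continuous_image_exact_subinterval_ordered[of "-s" "-t" g] False s t \<open>c < d\<close>
      unfolding g_def by auto
    have "f ` {-b'..-a'} = g ` {a'..b'}"
      unfolding g_def image_image[symmetric, of f uminus] by simp
    then show ?thesis
      using that[of "-b'" "-a'"] ab' s t by auto
  qed
qed

lemma preimage_interval_chain:
  fixes f :: "real \<Rightarrow> real" and lo hi :: "nat \<Rightarrow> real"
  assumes lo_hi: "\<And>n. lo n < hi n"
    and cont: "\<And>n. continuous_on {lo (Suc n)..hi (Suc n)} f"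
    and cover: "\<And>n. {lo n..hi n} \<subseteq> f ` {lo (Suc n)..hi (Suc n)}"
  obtains l r where "\<And>n. lo n \<le> l n" "\<And>n. l n < r n" "\<And>n. r n \<le> hi n"
    "\<And>n. f ` {l (Suc n)..r (Suc n)} = {l n..r n}"
proof -
  define inside where "inside n I \<longleftrightarrow> lo n \<le> fst I \<and> fst I < snd I \<and> snd I \<le> hi n" for n I
  have "\<exists>T. \<forall>n. inside n (T n) \<and>
      f ` {fst (T (Suc n))..snd (T (Suc n))} = {fst (T n)..snd (T n)}"
  proof (rule dependent_nat_choice)
    show "\<exists>I. inside 0 I"
      using lo_hi[of 0] by (auto simp: inside_def)
  next
    fix I n
    assume "inside n I"
    then have "fst I \<in> f ` {lo (Suc n)..hi (Suc n)}" "snd I \<in> f ` {lo (Suc n)..hi (Suc n)}"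
      using cover[of n] by (auto simp: inside_def)
    then obtain c d
      where "lo (Suc n) \<le> c" "c < d" "d \<le> hi (Suc n)" "f ` {c..d} = {fst I..snd I}"
      using continuous_image_exact_subinterval[OF cont[of n]] \<open>inside n I\<close>
      by (metis inside_def)
    then show "\<exists>J. inside (Suc n) J \<and> f ` {fst J..snd J} = {fst I..snd I}"
      by (intro exI[of _ "(c, d)"]) (auto simp: inside_def)
  qed
  then obtain T where "\<And>n. inside n (T n)"
    "\<And>n. f ` {fst (T (Suc n))..snd (T (Suc n))} = {fst (T n)..snd (T n)}"
    by blast
  then show ?thesis
    using that[of "\<lambda>n. fst (T n)" "\<lambda>n. snd (T n)"] by (auto simp: inside_def)
qed

lemma funpow_backward_orbit:
  assumes "\<And>n. f (x (Suc n)) = x n"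
  shows "(f ^^ n) (x n) = x 0"
  by (induction n) (simp_all add: funpow_swap1 assms)

lemma periodic_seq_shift:
  fixes x :: "nat \<Rightarrow> 'a"
  assumes "\<And>n. x (n + p) = x n"
  shows "x (n + k * p) = x n"
proof (induction k)
  case (Suc k)
  have "x (n + Suc k * p) = x (n + k * p + p)"
    by (simp add: add_ac)
  then show ?case
    using Suc assms by simp
qed simp

lemma splitting_partner_interval:
  fixes f :: "real \<Rightarrow> real"
  assumes cont: "continuous_on {0..1} f" and ab: "0 \<le> a" "a < b" "b \<le> 1"
    and lr: "lo \<le> l" "r \<le> hi"
    and image: "f ` {l..r} = {c..d}" "c < d" "{c..d} \<subseteq> f ` {a..b}"
    and disjoint: "{a..b} \<inter> {lo..hi} \<subseteq> {lo, hi}"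
  shows "\<exists>a' b'. 0 \<le> a' \<and> a' < b' \<and> b' \<le> 1 \<and> {a'..b'} \<inter> {l..r} \<subseteq> {l, r} \<and>
    f ` {a'..b'} = f ` {l..r}"
proof -
  have "continuous_on {a..b} f"
    using cont ab by (auto intro: continuous_on_subset)
  moreover have "c \<in> f ` {a..b}" "d \<in> f ` {a..b}"
    using image by auto
  ultimately obtain a' b' where ab': "a \<le> a'" "a' < b'" "b' \<le> b" "f ` {a'..b'} = {c..d}"
    using continuous_image_exact_subinterval \<open>c < d\<close> by metis
  have "{a'..b'} \<inter> {l..r} \<subseteq> {l, r}"
  proof
    fix z
    assume z: "z \<in> {a'..b'} \<inter> {l..r}"
    then have "z \<in> {a..b} \<inter> {lo..hi}"
      using ab' lr by auto
    then have "z = lo \<or> z = hi"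
      using disjoint by blast
    then show "z \<in> {l, r}"
      using z lr by auto
  qed
  then show ?thesis
    using ab ab' image by (intro exI[of _ a'] exI[of _ b']) auto
qed

lemma tight_seq_between_backward_orbits:
  fixes f :: "real \<Rightarrow> real" and x y :: "nat \<Rightarrow> real"
  assumes cont: "continuous_on {0..1} f" and surj: "f ` {0..1} = {0..1}"
    and x: "\<And>n. x n \<in> {0..1}" "\<And>n. f (x (Suc n)) = x n"
    and y: "\<And>n. y n \<in> {0..1}" "\<And>n. f (y (Suc n)) = y n"
    and xy: "x 0 < y 0" "{x 0..y 0} \<noteq> {0..1}"
  obtains l r where "tight_seq f l r" "\<And>n. min (x n) (y n) \<le> l n" "\<And>n. l n < r n"
    "\<And>n. r n \<le> max (x n) (y n)"
proof -
  define lo hi where "lo n = min (x n) (y n)" and "hi n = max (x n) (y n)" for n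
  have x_neq_y: "x n \<noteq> y n" for n
    using funpow_backward_orbit[of f x n] funpow_backward_orbit[of f y n] x y xy(1) by force
  have lo_hi: "lo n < hi n" for n
    using x_neq_y[of n] by (auto simp: lo_def hi_def min_def max_def)
  have lo_hi_01: "0 \<le> lo n" "hi n \<le> 1" for n
    using x(1)[of n] y(1)[of n] by (auto simp: lo_def hi_def)
  have cont_lo_hi: "continuous_on {lo n..hi n} f" for n
    using cont lo_hi_01[of n] by (auto intro: continuous_on_subset)
  have cover: "{lo n..hi n} \<subseteq> f ` {lo (Suc n)..hi (Suc n)}" for n
    using Icc_min_max_subset_continuous_image[OF cont_lo_hi[of "Suc n"], of "x (Suc n)" "y (Suc n)"]
    by (simp add: x(2) y(2) lo_def hi_def)
  obtain l r where lr: "\<And>n. lo n \<le> l n" "\<And>n. l n < r n" "\<And>n. r n \<le> hi n"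
    and img: "\<And>n. f ` {l (Suc n)..r (Suc n)} = {l n..r n}"
    using preimage_interval_chain[where lo = lo and hi = hi, OF lo_hi cont_lo_hi cover] by blast
  have proper: "{l n..r n} \<noteq> {0..1}" for n
  proof (induction n)
    case 0
    show ?case
      using lr[of 0] lo_hi_01[of 0] xy unfolding lo_def hi_def by auto
  next
    case (Suc n)
    then show ?case
      using img[of n] surj by auto
  qed
  have "tight_seq f l r"
    unfolding tight_seq_def using lr lo_hi_01 proper img by (meson less_imp_le order_trans)
  then show ?thesis
    using that lr unfolding lo_def hi_def by blast
qed

lemma splitting_seq_from_backward_orbits:
  fixes f :: "real \<Rightarrow> real" and x y :: "nat \<Rightarrow> real" and p :: nat
  assumes cont: "continuous_on {0..1} f" and surj: "f ` {0..1} = {0..1}"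
    and x: "\<And>n. x n \<in> {0..1}" "\<And>n. f (x (Suc n)) = x n" "\<And>n. x (n + p) = x n"
    and y: "\<And>n. y n \<in> {0..1}" "\<And>n. f (y (Suc n)) = y n" "\<And>n. y (n + p) = y n"
    and "0 < p" and xy: "x 0 < y 0" "{x 0..y 0} \<noteq> {0..1}"
    and ab: "0 \<le> a" "a < b" "b \<le> 1" "{x 0..y 0} \<subseteq> f ` {a..b}"
    and disjoint: "{a..b} \<inter> {min (x 1) (y 1)..max (x 1) (y 1)} \<subseteq> {x 1, y 1}"
  shows "admits_splitting_seq f"
proof -
  obtain l r where tight: "tight_seq f l r"
    and lr: "\<And>n. min (x n) (y n) \<le> l n" "\<And>n. l n < r n" "\<And>n. r n \<le> max (x n) (y n)"
    using tight_seq_between_backward_orbits[OF cont surj x(1,2) y(1,2) xy] by blast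
  have img: "f ` {l (Suc n)..r (Suc n)} = {l n..r n}" for n
    using tight by (simp add: tight_seq_def)
  have "\<exists>a' b'. 0 \<le> a' \<and> a' < b' \<and> b' \<le> 1 \<and> {a'..b'} \<inter> {l n..r n} \<subseteq> {l n, r n}
      \<and> f ` {a'..b'} = f ` {l n..r n}" if return: "n \<in> range (\<lambda>k. k * p + 1)" for n
  proof -
    obtain k where n: "n = Suc (k * p)"
      using return by auto
    have "x (k * p) = x 0" "y (k * p) = y 0" "x n = x 1" "y n = y 1"
      using periodic_seq_shift[of x p 0 k] periodic_seq_shift[of y p 0 k] x(3) y(3)
        periodic_seq_shift[of x p 1 k] periodic_seq_shift[of y p 1 k]
      by (simp_all add: n)
    then have "{l (k * p)..r (k * p)} \<subseteq> f ` {a..b}"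
      and "{a..b} \<inter> {min (x n) (y n)..max (x n) (y n)}
        \<subseteq> {min (x n) (y n), max (x n) (y n)}"
      using lr[of "k * p"] ab(4) xy(1) disjoint by (auto simp: min_def max_def)
    then show ?thesis
      using splitting_partner_interval[OF cont ab(1-3) lr(1,3) img[of "k * p"] lr(2)] n by simp
  qed
  moreover have "infinite (range (\<lambda>k. k * p + 1))"
    using \<open>0 < p\<close> by (intro range_inj_infinite) (auto simp: inj_on_def)
  ultimately show ?thesis
    unfolding admits_splitting_seq_def splitting_seq_def using tight by blast
qed

lemma funpow_backward_iterates:
  assumes fixed: "(f ^^ m) w = w" and "0 < m"
  shows "f ((f ^^ ((m - 1) * Suc n)) w) = (f ^^ ((m - 1) * n)) w"
    and "(f ^^ ((m - 1) * (n + m))) w = (f ^^ ((m - 1) * n)) w"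
proof -
  have "Suc ((m - 1) * Suc n) = (m - 1) * n + m"
    using \<open>0 < m\<close> by (cases m) auto
  then have "f ((f ^^ ((m - 1) * Suc n)) w) = (f ^^ ((m - 1) * n + m)) w"
    by (metis funpow.simps(2) o_apply)
  then show "f ((f ^^ ((m - 1) * Suc n)) w) = (f ^^ ((m - 1) * n)) w"
    using fixed by (simp add: funpow_add)
  show "(f ^^ ((m - 1) * (n + m))) w = (f ^^ ((m - 1) * n)) w"
    using funpow_mod_eq[OF fixed, of "(m - 1) * (n + m)"] funpow_mod_eq[OF fixed, of "(m - 1) * n"]
    by (simp add: distrib_left)
qed

lemma splitting_seq_from_periodic_points:
  fixes f :: "real \<Rightarrow> real"
  assumes cont: "continuous_on {0..1} f" and surj: "f ` {0..1} = {0..1}" and "0 < m"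
    and u: "(f ^^ m) u = u" "u \<in> {0..1}" and v: "(f ^^ m) v = v" "v \<in> {0..1}"
    and uv: "u < v" "{u..v} \<noteq> {0..1}"
    and ab: "0 \<le> a" "a < b" "b \<le> 1"
    and cover: "{u..v} \<subseteq> {min (f a) (f b)..max (f a) (f b)}"
    and disjoint: "{a..b} \<inter> {min ((f ^^ (m - 1)) u) ((f ^^ (m - 1)) v)
        ..max ((f ^^ (m - 1)) u) ((f ^^ (m - 1)) v)} \<subseteq> {(f ^^ (m - 1)) u, (f ^^ (m - 1)) v}"
  shows "admits_splitting_seq f"
proof -
  have iterate_01: "(f ^^ k) w \<in> {0..1}" if "w \<in> {0..1}" for k w
    using that surj by (induction k) auto
  have "continuous_on {a..b} f"
    using cont ab by (auto intro: continuous_on_subset)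
  then have image_cover: "{u..v} \<subseteq> f ` {a..b}"
    using cover Icc_min_max_subset_continuous_image[of a b f a b] ab
    by (meson atLeastAtMost_iff less_imp_le order_refl subset_trans)
  show ?thesis
  proof (rule splitting_seq_from_backward_orbits[OF cont surj, where p = m and a = a and b = b
        and x = "\<lambda>n. (f ^^ ((m - 1) * n)) u" and y = "\<lambda>n. (f ^^ ((m - 1) * n)) v"])
    show "(f ^^ ((m - 1) * n)) u \<in> {0..1}" "(f ^^ ((m - 1) * n)) v \<in> {0..1}" for n
      using iterate_01 u v by auto
    show "f ((f ^^ ((m - 1) * Suc n)) u) = (f ^^ ((m - 1) * n)) u"
      "f ((f ^^ ((m - 1) * Suc n)) v) = (f ^^ ((m - 1) * n)) v"
      "(f ^^ ((m - 1) * (n + m))) u = (f ^^ ((m - 1) * n)) u"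
      "(f ^^ ((m - 1) * (n + m))) v = (f ^^ ((m - 1) * n)) v" for n
      using funpow_backward_iterates[OF u(1) \<open>0 < m\<close>]
        funpow_backward_iterates[OF v(1) \<open>0 < m\<close>]
      by (simp_all only:)
  qed (use uv ab(1-3) image_cover disjoint \<open>0 < m\<close> in simp_all)
qed

lemma invariant_set_splitting_configuration:
  fixes f g :: "real \<Rightarrow> real" and P :: "real set"
  assumes "finite P" "P \<noteq> {}" "P \<subseteq> {0..1}"
    and f_P: "\<And>p. p \<in> P \<Longrightarrow> f p \<in> P" and g_P: "\<And>p. p \<in> P \<Longrightarrow> g p \<in> P"
    and f_g: "\<And>p. p \<in> P \<Longrightarrow> f (g p) = p" and g_f: "\<And>p. p \<in> P \<Longrightarrow> g (f p) = p"
    and period_1: "\<And>p. p \<in> P \<Longrightarrow> f p \<noteq> p" and period_2: "\<And>p. p \<in> P \<Longrightarrow> f (f p) \<noteq> p"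
  obtains u v a b where "u \<in> P" "v \<in> P" "u < v" "{u..v} \<noteq> {0..1}"
    "a \<in> P" "b \<in> P" "a < b"
    "{u..v} \<subseteq> {min (f a) (f b)..max (f a) (f b)}"
    "{a..b} \<inter> {min (g u) (g v)..max (g u) (g v)} \<subseteq> {g u, g v}"
proof -
  define q Q where "q = Min P" and "Q = Max P"
  have q: "q \<in> P" "\<And>p. p \<in> P \<Longrightarrow> q \<le> p"
    and Q: "Q \<in> P" "\<And>p. p \<in> P \<Longrightarrow> p \<le> Q"
    using assms(1,2) by (simp_all add: q_def Q_def)
  have "0 \<le> q" "Q \<le> 1"
    using assms(3) q(1) Q(1) by auto
  have "q < f q" "f Q < Q"
    using q Q f_P period_1 by (metis order_le_less)+
  show ?thesis
  proof (cases "f Q = q")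
    case True
    have Q': "g Q \<in> P" "f (g Q) = Q" "g Q < Q"
      using g_P f_g Q period_1 by (metis order_le_less)+
    have "f q < Q"
      using Q f_P q(1) period_2 True by (metis order_le_less)
    then show ?thesis
      using that[of "f q" Q "g Q" Q] Q' q Q(1) f_P g_f True \<open>q < f q\<close> \<open>0 \<le> q\<close> by auto
  next
    case False
    have q': "g q \<in> P" "f (g q) = q" "q < g q" "g q < Q"
      using g_P f_g q Q period_1 False by (metis order_le_less)+
    have "q < f Q"
      using q f_P Q(1) False by (metis order_le_less)
    show ?thesis
    proof (cases "f q \<le> f Q")
      case True
      then show ?thesis
        using that[of q "f q" "g q" Q] q' q Q f_P g_f \<open>q < f q\<close> \<open>f Q < Q\<close> \<open>Q \<le> 1\<close> by auto
    next
      case False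
      then show ?thesis
        using that[of q "f Q" q "g q"] q' q Q f_P g_f \<open>q < f Q\<close> \<open>f Q < Q\<close> \<open>Q \<le> 1\<close> by auto
    qed
  qed
qed

lemma periodic_point_funpow:
  assumes "periodic_point f m x"
  shows "periodic_point f m ((f ^^ i) x)"
proof (cases "m = 0")
  case True
  then show ?thesis
    by (simp add: periodic_point_def)
next
  case False
  have fixed: "(f ^^ m) x = x"
    and not_fixed: "\<And>k. 0 < k \<Longrightarrow> k < m \<Longrightarrow> (f ^^ k) x \<noteq> x"
    using assms by (auto simp: periodic_point_def)
  have commute: "(f ^^ a) ((f ^^ b) z) = (f ^^ b) ((f ^^ a) z)" for a b z
    by (metis add.commute comp_apply funpow_add)
  define j where "j = i mod m"
  have "(f ^^ (m - j)) ((f ^^ i) x) = (f ^^ (m - j + j)) x"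
    using funpow_mod_eq[OF fixed, of i] by (simp add: j_def funpow_add)
  then have return: "(f ^^ (m - j)) ((f ^^ i) x) = x"
    using fixed False by (simp add: j_def)
  show ?thesis
    unfolding periodic_point_def
  proof (intro conjI allI impI notI)
    show "(f ^^ m) ((f ^^ i) x) = (f ^^ i) x"
      using commute fixed by metis
  next
    fix k
    assume k: "0 < k \<and> k < m" and "(f ^^ k) ((f ^^ i) x) = (f ^^ i) x"
    then have "(f ^^ k) x = x"
      using return commute by metis
    then show False
      using not_fixed k by blast
  qed
qed

lemma finite_periodic_orbit:
  assumes "(f ^^ m) x = x" "0 < m"
  shows "finite (range (\<lambda>i. (f ^^ i) x))"
proof -
  have "range (\<lambda>i. (f ^^ i) x) \<subseteq> (\<lambda>i. (f ^^ i) x) ` {..<m}"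
  proof (rule image_subsetI)
    fix i
    have "(f ^^ i) x = (f ^^ (i mod m)) x"
      using funpow_mod_eq[where f = f and x = x and n = m and m = i] assms(1) by simp
    then show "(f ^^ i) x \<in> (\<lambda>i. (f ^^ i) x) ` {..<m}"
      using assms(2) by auto
  qed
  then show ?thesis
    by (rule finite_subset) simp
qed

lemma funpow_in_orbit:
  assumes "p \<in> range (\<lambda>i. (f ^^ i) x)"
  shows "(f ^^ k) p \<in> range (\<lambda>i. (f ^^ i) x)"
proof -
  obtain i where "p = (f ^^ i) x"
    using assms by auto
  then have "(f ^^ k) p = (f ^^ (k + i)) x"
    by (simp add: funpow_add)
  then show ?thesis
    by simp
qed

lemma periodic_orbit_splitting_configuration:
  fixes f :: "real \<Rightarrow> real"
  assumes maps: "f ` {0..1} \<subseteq> {0..1}"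
    and x: "x \<in> {0..1}" "periodic_point f m x" and "2 < m"
  obtains u v a b where "(f ^^ m) u = u" "u \<in> {0..1}" "(f ^^ m) v = v" "v \<in> {0..1}"
    "u < v" "{u..v} \<noteq> {0..1}" "0 \<le> a" "a < b" "b \<le> 1"
    "{u..v} \<subseteq> {min (f a) (f b)..max (f a) (f b)}"
    "{a..b} \<inter> {min ((f ^^ (m - 1)) u) ((f ^^ (m - 1)) v)
        ..max ((f ^^ (m - 1)) u) ((f ^^ (m - 1)) v)} \<subseteq> {(f ^^ (m - 1)) u, (f ^^ (m - 1)) v}"
proof -
  define P where "P = range (\<lambda>i. (f ^^ i) x)"
  have fixed: "(f ^^ m) p = p"
    and not_fixed: "\<And>k. 0 < k \<Longrightarrow> k < m \<Longrightarrow> (f ^^ k) p \<noteq> p"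
    if "p \<in> P" for p
    using that periodic_point_funpow[OF x(2)] by (auto simp: P_def periodic_point_def)
  have "finite P"
    using finite_periodic_orbit[where f = f and m = m and x = x] x(2) \<open>2 < m\<close>
    by (simp add: P_def periodic_point_def)
  have "(f ^^ i) x \<in> {0..1}" for i
    using maps x(1) by (induction i) (auto simp: image_subset_iff)
  then have "P \<subseteq> {0..1}"
    by (auto simp: P_def)
  have f_P: "f p \<in> P" and g_P: "(f ^^ (m - 1)) p \<in> P" if "p \<in> P" for p
    using funpow_in_orbit[where p = p and f = f and x = x and k = 1]
      funpow_in_orbit[where p = p and f = f and x = x and k = "m - 1"] that by (simp_all add: P_def)
  have f_g: "f ((f ^^ (m - 1)) p) = p" and g_f: "(f ^^ (m - 1)) (f p) = p" if "p \<in> P" for p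
    using funpow_backward_iterates(1)[OF fixed[OF that], of 0] \<open>2 < m\<close>
    by (simp_all add: funpow_swap1)
  have period_1: "f p \<noteq> p" and period_2: "f (f p) \<noteq> p" if "p \<in> P" for p
    using not_fixed[OF that, of 1] not_fixed[OF that, of 2] \<open>2 < m\<close>
    by (simp_all add: numeral_2_eq_2)
  have "P \<noteq> {}"
    by (simp add: P_def)
  obtain u v a b where uv: "u \<in> P" "v \<in> P" "u < v" "{u..v} \<noteq> {0..1}"
    and ab: "a \<in> P" "b \<in> P" "a < b"
    and cover: "{u..v} \<subseteq> {min (f a) (f b)..max (f a) (f b)}"
    and disjoint: "{a..b} \<inter> {min ((f ^^ (m - 1)) u) ((f ^^ (m - 1)) v)
        ..max ((f ^^ (m - 1)) u) ((f ^^ (m - 1)) v)} \<subseteq> {(f ^^ (m - 1)) u, (f ^^ (m - 1)) v}"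
    by (rule invariant_set_splitting_configuration[OF \<open>finite P\<close> \<open>P \<noteq> {}\<close> \<open>P \<subseteq> {0..1}\<close>
          f_P g_P f_g g_f period_1 period_2])
  show ?thesis
  proof (rule that[OF fixed[OF uv(1)] _ fixed[OF uv(2)] _ uv(3,4) _ ab(3) _ cover disjoint])
    show "u \<in> {0..1}" "v \<in> {0..1}" "0 \<le> a" "b \<le> 1"
      using \<open>P \<subseteq> {0..1}\<close> uv ab by auto
  qed
qed

theorem lemma3p8:
  fixes f :: "real \<Rightarrow> real" and m :: nat
  assumes "continuous_on {0..1} f"
    and "f ` {0..1} = {0..1}"
    and "m > 2"
    and "\<exists>x\<in>{0..1}. periodic_point f m x"
  shows "admits_splitting_seq f"
proof -
  obtain x where x: "x \<in> {0..1}" "periodic_point f m x"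
    using assms(4) by blast
  have maps: "f ` {0..1} \<subseteq> {0..1}"
    using assms(2) by simp
  have "0 < m"
    using assms(3) by simp
  show ?thesis
    by (rule periodic_orbit_splitting_configuration[OF maps x assms(3)],
        rule splitting_seq_from_periodic_points[OF assms(1,2) \<open>0 < m\<close>]) assumption+
qed

end
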